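(* Let $k\ge 1$ and $n\ge 3$, and let $c$ be a connected $k$-colouring of the edges of $K_n$ whose vertices are $v_1,\dots,v_n$, with the following properties: (i) exactly $l$ distinct $3$-sets of colours occur as colour sets of multicoloured triangles; (ii) exactly $k-2$ of these $3$-sets contain colour $k$; (iii) the edges of colour $k$ are exactly the edges of the cycle $v_1v_2\cdots v_nv_1$; (iv) all edges $v_iv_{i+2}$, $i\in[n]$, have the same colour (indices taken mod $n$). Then there is a connected $(k+1)$-colouring $c'$ of the edges of $K_{2n}$, whose vertices can be labelled $v'_1,\dots,v'_{2n}$, with the following properties: (i') exactly $l+k-1$ distinct $3$-sets of colours occur as colour sets of multicoloured triangles; (ii') exactly $k-1$ of these $3$-sets contain colour $k+1$; (iii') the edges of colour $k+1$ form a cycle; (iv') all edges $v'_iv'_{i+2}$, $i\in[2n]$, have the same colour (indices taken mod $2n$).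
   Context: A $k$-colouring of the edges of the complete graph $K_n$ (colours from $\{1,\dots,k\}$) is called connected if for each colour $i$ the edges of colour $i$ form a connected spanning subgraph of $K_n$. A triangle is multicoloured if its three edges have three distinct colours; its colour set is the set of these three colours. *)

theory Defs
  imports Main
begin

text \<open>Edge colourings of K_n with vertex set {0..<n} (vertex v_i is i-1),
  represented by a symmetric function on pairs of distinct vertices.\<close>

definition is_colouring :: "(nat \<Rightarrow> nat \<Rightarrow> nat) \<Rightarrow> nat \<Rightarrow> nat \<Rightarrow> bool" where
  "is_colouring c n k \<longleftrightarrow>
     (\<forall>u<n. \<forall>v<n. u \<noteq> v \<longrightarrow> c u v = c v u \<and> c u v \<in> {1..k})"

definition colour_edge :: "(nat \<Rightarrow> nat \<Rightarrow> nat) \<Rightarrow> nat \<Rightarrow> nat \<Rightarrow> nat \<Rightarrow> nat \<Rightarrow> bool" where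
  "colour_edge c n i u v \<longleftrightarrow> u < n \<and> v < n \<and> u \<noteq> v \<and> c u v = i"

definition connected_colouring :: "(nat \<Rightarrow> nat \<Rightarrow> nat) \<Rightarrow> nat \<Rightarrow> nat \<Rightarrow> bool" where
  "connected_colouring c n k \<longleftrightarrow> is_colouring c n k \<and>
     (\<forall>i\<in>{1..k}. \<forall>u<n. \<forall>v<n. (colour_edge c n i)\<^sup>*\<^sup>* u v)"

definition triangle_sets :: "(nat \<Rightarrow> nat \<Rightarrow> nat) \<Rightarrow> nat \<Rightarrow> nat set set" where
  "triangle_sets c n = {{c a b, c b d, c a d} | a b d.
      a < n \<and> b < n \<and> d < n \<and> a \<noteq> b \<and> b \<noteq> d \<and> a \<noteq> d \<and>
      card {c a b, c b d, c a d} = 3}"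

definition colour_class_is_cycle :: "(nat \<Rightarrow> nat \<Rightarrow> nat) \<Rightarrow> nat \<Rightarrow> nat \<Rightarrow> bool" where
  "colour_class_is_cycle c n i \<longleftrightarrow>
     (\<exists>m p. m \<ge> 3 \<and> inj_on p {0..<m} \<and> p ` {0..<m} \<subseteq> {0..<n} \<and>
        (\<forall>u v. colour_edge c n i u v \<longleftrightarrow>
           (\<exists>j<m. (u = p j \<and> v = p (Suc j mod m)) \<or> (v = p j \<and> u = p (Suc j mod m)))))"

end

theory Submission
  imports Defs
begin

text \<open>Blow up every vertex i of K_n into the two vertices 2i and 2i+1 of K_2n, give the
  Hamiltonian cycle 0, 1, ..., 2n-1 the new colour k+1, and let every other edge inherit the colour
  of the edge of K_n between the blobs of its ends. Each old colour class lifts to the even vertices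
  and still reaches every odd vertex; the edges x(x+2) join consecutive blobs off the new cycle, so
  they all get colour k. A multicoloured triangle avoiding colour k+1 has its vertices in three
  distinct blobs and is an old one. A triangle using the cycle edge from blob i to blob i+1 has its
  apex in a third blob j: if j is i-1 or i+2 its colours are k+1, k and the colour of the
  distance-two edges; otherwise i, i+1, j span an old triangle through the k-edge i(i+1), whose
  colour set reappears with k replaced by k+1. So the new colour sets containing k+1 are the k-2
  recoloured old ones and one more.\<close>

definition cyc_adj :: "nat \<Rightarrow> nat \<Rightarrow> nat \<Rightarrow> bool" where
  "cyc_adj N x y \<longleftrightarrow> y = Suc x mod N \<or> x = Suc y mod N"

lemma cyc_adj_sym: "cyc_adj N x y \<longleftrightarrow> cyc_adj N y x"
  unfolding cyc_adj_def by auto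

lemma cyc_adj_3: "u < 3 \<Longrightarrow> v < 3 \<Longrightarrow> u \<noteq> v \<Longrightarrow> cyc_adj 3 u v"
  unfolding cyc_adj_def less_Suc_eq numeral_3_eq_3 by auto

lemma cyc_adj_iff_cycle_edge:
  assumes "2 \<le> N"
  shows "(u < N \<and> v < N \<and> u \<noteq> v \<and> cyc_adj N u v) \<longleftrightarrow>
    (\<exists>j<N. u = j \<and> v = Suc j mod N \<or> v = j \<and> u = Suc j mod N)"
proof -
  have "Suc j mod N \<noteq> j" "j \<noteq> Suc j mod N" "Suc j mod N < N" if "j < N" for j
    using that assms by (auto simp: mod_Suc)
  then show ?thesis unfolding cyc_adj_def by auto
qed

lemma Suc_mod_inj: "i < N \<Longrightarrow> j < N \<Longrightarrow> Suc i mod N = Suc j mod N \<Longrightarrow> i = j"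
  by (auto simp: mod_Suc split: if_splits)

lemma mod_double_div2: "(y::nat) mod (2 * n) div 2 = y div 2 mod n"
  by (simp add: mod_mult2_eq)

lemma not_cyc_adj_plus2:
  assumes "4 \<le> N" "x < N" shows "\<not> cyc_adj N x ((x + 2) mod N)"
proof -
  consider "x + 2 < N" | "x + 2 = N" | "x + 1 = N" using assms(2) by linarith
  then show ?thesis unfolding cyc_adj_def using assms by cases (auto simp: mod_Suc)
qed

lemma not_cyc_adj_even: "a < n \<Longrightarrow> b < n \<Longrightarrow> \<not> cyc_adj (2 * n) (2 * a) (2 * b)"
  unfolding cyc_adj_def by (auto simp: mod_Suc) presburger+

lemma not_cyc_adj_odd_even:
  assumes "a < n" "j < n" "j \<noteq> a" "j \<noteq> Suc a mod n"
  shows "\<not> cyc_adj (2 * n) (Suc (2 * a)) (2 * j)"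
proof
  assume "cyc_adj (2 * n) (Suc (2 * a)) (2 * j)"
  moreover have "Suc (Suc (2 * a)) mod (2 * n) = 2 * (Suc a mod n)"
    by (simp add: mod_mult_mult1[symmetric])
  moreover have "Suc (2 * j) mod (2 * n) = Suc (2 * j)" using assms(2) by simp
  ultimately show False unfolding cyc_adj_def using assms(3,4) by auto
qed

lemma cyc_adj_same_fibre:
  assumes "x < 2 * n" "y < 2 * n" "x \<noteq> y" "x div 2 = y div 2"
  shows "cyc_adj (2 * n) x y"
proof -
  have "y = Suc x \<or> x = Suc y" using assms(3,4) by presburger
  then show ?thesis unfolding cyc_adj_def using assms(1,2) by auto
qed

lemma Suc_mod_double_fibre:
  assumes "x < 2 * n" "y = Suc x mod (2 * n)" "x div 2 \<noteq> y div 2"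
  shows "y div 2 = Suc (x div 2) mod n"
proof -
  have y: "y div 2 = Suc x div 2 mod n" using assms(2) by (simp add: mod_double_div2)
  have "odd x"
  proof
    assume "even x"
    then have "y div 2 = x div 2" using y assms(1) by simp
    then show False using assms(3) by simp
  qed
  then show ?thesis using y by (auto elim: oddE)
qed

lemma card_3_distinct: "card {x, y, z} = 3 \<Longrightarrow> x \<noteq> y \<and> y \<noteq> z \<and> x \<noteq> z"
  by (auto simp: card_insert_if split: if_splits)

lemma triangle_setsI:
  "a < N \<Longrightarrow> b < N \<Longrightarrow> d < N \<Longrightarrow> a \<noteq> b \<Longrightarrow> b \<noteq> d \<Longrightarrow> a \<noteq> d \<Longrightarrow>
   card {f a b, f b d, f a d} = 3 \<Longrightarrow> {f a b, f b d, f a d} \<in> triangle_sets f N"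
  unfolding triangle_sets_def by blast

lemma triangle_setsE_edge:
  assumes sym: "\<And>u v. u < N \<Longrightarrow> v < N \<Longrightarrow> u \<noteq> v \<Longrightarrow> f u v = f v u"
    and "S \<in> triangle_sets f N" "s \<in> S"
  obtains a b d where "a < N" "b < N" "d < N" "a \<noteq> b" "b \<noteq> d" "a \<noteq> d" "f a b = s"
    "S = {s, f b d, f a d}" "card S = 3"
proof -
  obtain a b d where abd: "a < N" "b < N" "d < N" "a \<noteq> b" "b \<noteq> d" "a \<noteq> d"
    and S: "S = {f a b, f b d, f a d}" "card S = 3"
    using assms(2) unfolding triangle_sets_def by blast
  consider "s = f a b" | "s = f b d" | "s = f a d" using \<open>s \<in> S\<close> S by blast
  then show thesis
  proof cases
    case 1 then show thesis using that abd S by blast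
  next
    case 2 then show thesis
      using that[of b d a] abd S sym[of d a] sym[of b a] by (auto simp: insert_commute)
  next
    case 3 then show thesis using that[of a d b] abd S sym[of d b] by (auto simp: insert_commute)
  qed
qed

lemma triangle_setsE_oriented:
  assumes sym: "\<And>u v. u < N \<Longrightarrow> v < N \<Longrightarrow> u \<noteq> v \<Longrightarrow> f u v = f v u"
    and "S \<in> triangle_sets f N" "s \<in> S"
    and orient: "\<And>u v. u < N \<Longrightarrow> v < N \<Longrightarrow> u \<noteq> v \<Longrightarrow> f u v = s \<Longrightarrow> R u v \<or> R v u"
  obtains a b d where "a < N" "b < N" "d < N" "a \<noteq> b" "b \<noteq> d" "a \<noteq> d" "R a b"
    "S = {s, f b d, f a d}" "card S = 3"
proof -
  obtain a b d where abd: "a < N" "b < N" "d < N" "a \<noteq> b" "b \<noteq> d" "a \<noteq> d"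
    and s: "f a b = s" and S: "S = {s, f b d, f a d}" "card S = 3"
    using triangle_setsE_edge[OF sym assms(2,3)] by blast
  from orient[OF abd(1,2,4) s] show thesis
  proof
    assume "R a b" then show thesis using that abd S by blast
  next
    assume "R b a" then show thesis using that[of b a d] abd S by (auto simp: insert_commute)
  qed
qed

lemma triangle_sets_subset_Pow:
  assumes "is_colouring f N k" shows "triangle_sets f N \<subseteq> Pow {1..k}"
  using assms unfolding triangle_sets_def is_colouring_def by auto

lemma colour_edge_symp: "is_colouring f N k \<Longrightarrow> symp (colour_edge f N i)"
  unfolding is_colouring_def colour_edge_def symp_def by auto

lemma colour_class_connected_via:
  assumes "is_colouring f N k" and "\<And>v. v < N \<Longrightarrow> (colour_edge f N i)\<^sup>*\<^sup>* h v"
    and "u < N" "v < N"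
  shows "(colour_edge f N i)\<^sup>*\<^sup>* u v"
  using assms symp_rtranclp[OF colour_edge_symp[OF assms(1)]]
  by (meson rtranclp_trans sympD)

lemma rtranclp_walk_from_0:
  assumes "\<And>x. Suc x < N \<Longrightarrow> R x (Suc x)" shows "v < N \<Longrightarrow> R\<^sup>*\<^sup>* 0 v"
proof (induction v)
  case (Suc v) then show ?case using assms by (meson Suc_lessD rtranclp.rtrancl_into_rtrancl)
qed simp

lemma connected_colouring_monochromatic:
  assumes "connected_colouring f N k" "2 \<le> N" "\<forall>u<N. \<forall>v<N. u \<noteq> v \<longrightarrow> f u v = k"
  shows "k = 1"
proof -
  have "is_colouring f N k" using assms(1) unfolding connected_colouring_def by simp
  then have "f 0 1 \<in> {1..k}" using assms(2) unfolding is_colouring_def by force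
  then have "1 \<in> {1..k}" by auto
  then have "(colour_edge f N 1)\<^sup>*\<^sup>* 0 1" using assms(1,2) unfolding connected_colouring_def by auto
  then obtain y where "colour_edge f N 1 0 y" by (metis converse_rtranclpE zero_neq_one)
  then show "k = 1" using assms(3) unfolding colour_edge_def by auto
qed

definition blow_up :: "(nat \<Rightarrow> nat \<Rightarrow> nat) \<Rightarrow> nat \<Rightarrow> nat \<Rightarrow> nat \<Rightarrow> nat \<Rightarrow> nat" where
  "blow_up c n k x y = (if cyc_adj (2 * n) x y then k + 1 else c (x div 2) (y div 2))"

locale cycle_coloured =
  fixes c :: "nat \<Rightarrow> nat \<Rightarrow> nat" and n k col :: nat
  assumes n_ge_4: "4 \<le> n"
    and connected: "connected_colouring c n k"
    and colour_k: "\<forall>u<n. \<forall>v<n. u \<noteq> v \<longrightarrow> (c u v = k \<longleftrightarrow> v = Suc u mod n \<or> u = Suc v mod n)"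
    and colour_dist2: "\<forall>i<n. c i ((i + 2) mod n) = col"
begin

abbreviation c' :: "nat \<Rightarrow> nat \<Rightarrow> nat" where "c' \<equiv> blow_up c n k"

lemma colouring: "is_colouring c n k"
  using connected unfolding connected_colouring_def by simp

lemma c_sym: "u < n \<Longrightarrow> v < n \<Longrightarrow> u \<noteq> v \<Longrightarrow> c u v = c v u"
  and c_range: "u < n \<Longrightarrow> v < n \<Longrightarrow> u \<noteq> v \<Longrightarrow> c u v \<in> {1..k}"
  using colouring unfolding is_colouring_def by auto

lemma c_eq_k_iff: "u < n \<Longrightarrow> v < n \<Longrightarrow> u \<noteq> v \<Longrightarrow> c u v = k \<longleftrightarrow> cyc_adj n u v"
  using colour_k unfolding cyc_adj_def by auto

lemma c_0_2: "c 0 2 = col"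
  using spec[OF colour_dist2, of 0] n_ge_4 by (simp add: numeral_2_eq_2)

lemma col_range: "col \<in> {1..k}" and col_ne_k: "col \<noteq> k"
proof -
  note c_0_2
  moreover have "\<not> cyc_adj n 0 2" using n_ge_4 unfolding cyc_adj_def by auto
  ultimately show "col \<in> {1..k}" "col \<noteq> k" using c_range[of 0 2] c_eq_k_iff[of 0 2] n_ge_4 by auto
qed

lemma blow_up_not_adj: "\<not> cyc_adj (2 * n) x y \<Longrightarrow> c' x y = c (x div 2) (y div 2)"
  unfolding blow_up_def by simp

lemma blow_up_even: "a < n \<Longrightarrow> b < n \<Longrightarrow> c' (2 * a) (2 * b) = c a b"
  using blow_up_not_adj not_cyc_adj_even by simp

lemma fibres_differ:
  "x < 2 * n \<Longrightarrow> y < 2 * n \<Longrightarrow> x \<noteq> y \<Longrightarrow> \<not> cyc_adj (2 * n) x y \<Longrightarrow> x div 2 \<noteq> y div 2"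
  using cyc_adj_same_fibre by blast

lemma blow_up_range:
  assumes "x < 2 * n" "y < 2 * n" "x \<noteq> y" "\<not> cyc_adj (2 * n) x y"
  shows "c' x y \<in> {1..k}"
  using c_range[of "x div 2" "y div 2"] fibres_differ[OF assms] assms blow_up_not_adj by auto

lemma blow_up_eq_k1_iff:
  "x < 2 * n \<Longrightarrow> y < 2 * n \<Longrightarrow> x \<noteq> y \<Longrightarrow> c' x y = k + 1 \<longleftrightarrow> cyc_adj (2 * n) x y"
  using blow_up_range by (force simp: blow_up_def)

lemma blow_up_sym: "x < 2 * n \<Longrightarrow> y < 2 * n \<Longrightarrow> x \<noteq> y \<Longrightarrow> c' x y = c' y x"
  using fibres_differ c_sym cyc_adj_sym[of "2 * n" x y] by (auto simp: blow_up_def)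

lemma blow_up_colouring: "is_colouring c' (2 * n) (k + 1)"
  unfolding is_colouring_def using blow_up_sym blow_up_range blow_up_eq_k1_iff by fastforce

lemma blow_up_dist2: "x < 2 * n \<Longrightarrow> c' x ((x + 2) mod (2 * n)) = k"
proof -
  assume x: "x < 2 * n"
  let ?a = "x div 2"
  have a: "?a < n" using x by auto
  have fibre: "(x + 2) mod (2 * n) div 2 = Suc ?a mod n" by (simp add: mod_double_div2)
  have "\<not> cyc_adj (2 * n) x ((x + 2) mod (2 * n))" using not_cyc_adj_plus2 n_ge_4 x by simp
  then have "c' x ((x + 2) mod (2 * n)) = c ?a (Suc ?a mod n)" using blow_up_not_adj fibre by simp
  also have "\<dots> = k" using c_eq_k_iff[of ?a "Suc ?a mod n"] a n_ge_4
    unfolding cyc_adj_def by (auto simp: mod_Suc)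
  finally show ?thesis .
qed

lemma blow_up_cycle_class: "colour_class_is_cycle c' (2 * n) (k + 1)"
proof -
  have "colour_edge c' (2 * n) (k + 1) u v \<longleftrightarrow>
      u < 2 * n \<and> v < 2 * n \<and> u \<noteq> v \<and> cyc_adj (2 * n) u v" for u v
    using blow_up_eq_k1_iff unfolding colour_edge_def by blast
  then show ?thesis unfolding colour_class_is_cycle_def
    using cyc_adj_iff_cycle_edge[of "2 * n"] n_ge_4 by (intro exI[of _ "2 * n"] exI[of _ id]) auto
qed

lemma blow_up_connected_cycle_colour:
  "u < 2 * n \<Longrightarrow> v < 2 * n \<Longrightarrow> (colour_edge c' (2 * n) (k + 1))\<^sup>*\<^sup>* u v"
proof (rule colour_class_connected_via[OF blow_up_colouring])
  show "(colour_edge c' (2 * n) (k + 1))\<^sup>*\<^sup>* 0 v" if "v < 2 * n" for v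
  proof (rule rtranclp_walk_from_0[OF _ that])
    show "colour_edge c' (2 * n) (k + 1) x (Suc x)" if "Suc x < 2 * n" for x
      using that blow_up_eq_k1_iff[of x "Suc x"] unfolding colour_edge_def cyc_adj_def by simp
  qed
qed

lemma blow_up_path_even:
  "(colour_edge c n i)\<^sup>*\<^sup>* a b \<Longrightarrow> (colour_edge c' (2 * n) i)\<^sup>*\<^sup>* (2 * a) (2 * b)"
proof (induction rule: rtranclp_induct)
  case (step b d)
  then have "colour_edge c' (2 * n) i (2 * b) (2 * d)"
    using blow_up_even unfolding colour_edge_def by auto
  with step.IH show ?case by (rule rtranclp.rtrancl_into_rtrancl)
qed simp

text \<open>The cycle neighbours of an odd vertex 2a+1 are 2a and 2 (Suc a mod n), so its edges to the
  even copy of any such j have colour c a j.\<close>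

lemma neighbour_avoiding_successor:
  assumes "i \<in> {1..k}" "a < n"
  obtains j where "j < n" "j \<noteq> a" "j \<noteq> Suc a mod n" "c a j = i"
proof (cases "i = k")
  case True
  define j where "j = (if a = 0 then n - 1 else a - 1)"
  have "j < n" "j \<noteq> a" "j \<noteq> Suc a mod n" "a = Suc j mod n"
    using assms(2) n_ge_4 unfolding j_def by (auto simp: mod_Suc)
  then show thesis using that c_eq_k_iff[of a j] assms(2) True unfolding cyc_adj_def by auto
next
  case False
  have "Suc a mod n \<noteq> a" "Suc a mod n < n" using assms(2) n_ge_4 by (auto simp: mod_Suc)
  moreover have "(colour_edge c n i)\<^sup>*\<^sup>* a (Suc a mod n)"
    using connected assms calculation unfolding connected_colouring_def by blast
  ultimately obtain j where j: "colour_edge c n i a j" by (metis converse_rtranclpE)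
  then have "\<not> cyc_adj n a j" using c_eq_k_iff False unfolding colour_edge_def by auto
  then show thesis using that j unfolding colour_edge_def cyc_adj_def by auto
qed

lemma blow_up_connected_old_colour:
  assumes "i \<in> {1..k}" "u < 2 * n" "v < 2 * n"
  shows "(colour_edge c' (2 * n) i)\<^sup>*\<^sup>* u v"
proof (rule colour_class_connected_via[OF blow_up_colouring _ assms(2,3)])
  have even: "(colour_edge c' (2 * n) i)\<^sup>*\<^sup>* 0 (2 * a)" if "a < n" for a
    using blow_up_path_even[of i 0 a] connected assms(1) that n_ge_4
    unfolding connected_colouring_def by auto
  show "(colour_edge c' (2 * n) i)\<^sup>*\<^sup>* 0 x" if "x < 2 * n" for x
  proof (cases "even x")
    case True then show ?thesis using even[of "x div 2"] that by auto
  next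
    case False
    define a where "a = x div 2"
    have x: "x = Suc (2 * a)" "a < n" using False that unfolding a_def by auto
    obtain j where j: "j < n" "j \<noteq> a" "j \<noteq> Suc a mod n" "c a j = i"
      using neighbour_avoiding_successor[OF assms(1) \<open>a < n\<close>] .
    have "c' (2 * j) x = i"
      using blow_up_not_adj not_cyc_adj_odd_even[OF x(2) j(1-3)] cyc_adj_sym c_sym j x by auto
    then have "colour_edge c' (2 * n) i (2 * j) x" unfolding colour_edge_def using j x by auto
    with even[OF j(1)] show ?thesis by (rule rtranclp.rtrancl_into_rtrancl)
  qed
qed

lemma blow_up_connected: "connected_colouring c' (2 * n) (k + 1)"
  unfolding connected_colouring_def
proof (intro conjI ballI allI impI blow_up_colouring)
  fix i u v assume "i \<in> {1..k + 1}" "u < 2 * n" "v < 2 * n"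
  then consider "i = k + 1" | "i \<in> {1..k}" by fastforce
  then show "(colour_edge c' (2 * n) i)\<^sup>*\<^sup>* u v"
    using blow_up_connected_cycle_colour blow_up_connected_old_colour \<open>u < 2 * n\<close> \<open>v < 2 * n\<close>
    by cases auto
qed

definition recolour_k :: "nat set \<Rightarrow> nat set" where
  "recolour_k S = insert (k + 1) (S - {k})"

definition new_sets :: "nat set set" where
  "new_sets = recolour_k ` {S \<in> triangle_sets c n. k \<in> S} \<union> {{k + 1, k, col}}"

lemma triangle_sets_subset_blow_up: "triangle_sets c n \<subseteq> triangle_sets c' (2 * n)"
proof
  fix S assume "S \<in> triangle_sets c n"
  then obtain a b d where abd: "a < n" "b < n" "d < n" "a \<noteq> b" "b \<noteq> d" "a \<noteq> d"
    and S: "S = {c a b, c b d, c a d}" "card S = 3"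
    unfolding triangle_sets_def by blast
  then have "{c' (2 * a) (2 * b), c' (2 * b) (2 * d), c' (2 * a) (2 * d)} \<in> triangle_sets c' (2 * n)"
    by (intro triangle_setsI) (auto simp: blow_up_even)
  then show "S \<in> triangle_sets c' (2 * n)" using abd S by (simp add: blow_up_even)
qed

lemma recolour_k_in_blow_up:
  assumes "S \<in> triangle_sets c n" "k \<in> S"
  shows "recolour_k S \<in> triangle_sets c' (2 * n)"
proof -
  obtain a b d where abd: "a < n" "b < n" "d < n" "a \<noteq> b" "b \<noteq> d" "a \<noteq> d" "b = Suc a mod n"
    and S: "S = {k, c b d, c a d}" "card S = 3"
  proof (rule triangle_setsE_oriented[where R = "\<lambda>u v. v = Suc u mod n", OF c_sym assms])
    show "v = Suc u mod n \<or> u = Suc v mod n" if "u < n" "v < n" "u \<noteq> v" "c u v = k" for u v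
      using that colour_k by blast
  qed (use that in blast)
  let ?x = "Suc (2 * a)"
  have "Suc ?x mod (2 * n) = 2 * b" using abd(7) by (simp add: mod_mult_mult1[symmetric])
  then have xb: "c' ?x (2 * b) = k + 1" by (simp add: blow_up_def cyc_adj_def)
  have xd: "c' ?x (2 * d) = c a d"
    using blow_up_not_adj not_cyc_adj_odd_even[of a n d] abd by simp
  have "card {k, c b d, c a d} = 3" using S by simp
  from card_3_distinct[OF this] have colours: "c b d \<noteq> k" "c a d \<noteq> k" "c b d \<noteq> c a d"
    by auto
  have "c b d \<le> k" "c a d \<le> k" using c_range abd by auto
  with colours have "{c' ?x (2 * b), c' (2 * b) (2 * d), c' ?x (2 * d)} \<in> triangle_sets c' (2 * n)"
    using abd xb xd by (intro triangle_setsI) (auto simp: blow_up_even)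
  moreover have "recolour_k S = {c' ?x (2 * b), c' (2 * b) (2 * d), c' ?x (2 * d)}"
    using S colours abd xb xd by (auto simp: recolour_k_def blow_up_even)
  ultimately show ?thesis by simp
qed

lemma distance_two_triangle_in_blow_up: "{k + 1, k, col} \<in> triangle_sets c' (2 * n)"
proof -
  have "c' 1 2 = k + 1" using n_ge_4 by (simp add: blow_up_def cyc_adj_def)
  moreover have "c' 2 4 = k" using blow_up_even[of 1 2] c_eq_k_iff[of 1 2] n_ge_4
    by (simp add: cyc_adj_def)
  moreover have "c' 1 4 = c 0 2" using n_ge_4 by (simp add: blow_up_def cyc_adj_def)
  moreover note c_0_2
  moreover have "card {k + 1, k, col} = 3" using col_range col_ne_k by auto
  ultimately show ?thesis using triangle_setsI[of 1 "2 * n" 2 4 c'] n_ge_4 by simp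
qed

lemma fibre_triangle_in_new_sets:
  assumes "i < n" "j < n" "j \<noteq> i" "j \<noteq> Suc i mod n"
    and card: "card {k + 1, c (Suc i mod n) j, c i j} = 3"
  shows "{k + 1, c (Suc i mod n) j, c i j} \<in> new_sets"
proof -
  let ?i' = "Suc i mod n"
  have i': "?i' < n" "?i' \<noteq> i" using assms(1) n_ge_4 by (auto simp: mod_Suc)
  have ne: "c ?i' j \<noteq> c i j" using card_3_distinct[OF card] by blast
  consider "c i j = k" | "c ?i' j = k" | "c i j \<noteq> k" "c ?i' j \<noteq> k" by blast
  then show ?thesis
  proof cases
    case 1
    then have "i = Suc j mod n" using c_eq_k_iff assms(1-4) unfolding cyc_adj_def by auto
    then have "?i' = (j + 2) mod n" by (simp add: mod_Suc_eq)
    then have "c ?i' j = col" using colour_dist2 c_sym assms(2) i' by (metis Suc_mod_inj)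
    then show ?thesis using 1 unfolding new_sets_def by auto
  next
    case 2
    then have "j = Suc ?i' mod n \<or> ?i' = Suc j mod n"
      using c_eq_k_iff assms(2,4) i' unfolding cyc_adj_def by auto
    then have "j = (i + 2) mod n" using Suc_mod_inj[of i n j] assms(1-3) by (auto simp: mod_Suc_eq)
    then have "c i j = col" using colour_dist2 assms(1) by auto
    then show ?thesis using 2 unfolding new_sets_def by auto
  next
    case 3
    have k: "c i ?i' = k" using c_eq_k_iff assms(1) i' unfolding cyc_adj_def by auto
    with 3 ne have "card {c i ?i', c ?i' j, c i j} = 3" by auto
    then have "{c i ?i', c ?i' j, c i j} \<in> triangle_sets c n"
      using triangle_setsI assms(1-4) i' by metis
    moreover have "{k + 1, c ?i' j, c i j} = recolour_k {c i ?i', c ?i' j, c i j}"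
      using k 3 unfolding recolour_k_def by auto
    ultimately show ?thesis using k unfolding new_sets_def by auto
  qed
qed

lemma triangle_with_cycle_colour_in_new_sets:
  assumes "S \<in> triangle_sets c' (2 * n)" "k + 1 \<in> S"
  shows "S \<in> new_sets"
proof -
  obtain x y z where xyz: "x < 2 * n" "y < 2 * n" "z < 2 * n" "x \<noteq> y" "y \<noteq> z" "x \<noteq> z"
      "y = Suc x mod (2 * n)"
    and S: "S = {k + 1, c' y z, c' x z}" "card S = 3"
  proof (rule triangle_setsE_oriented[where R = "\<lambda>u v. v = Suc u mod (2 * n)", OF blow_up_sym assms])
    show "v = Suc u mod (2 * n) \<or> u = Suc v mod (2 * n)"
      if "u < 2 * n" "v < 2 * n" "u \<noteq> v" "c' u v = k + 1" for u v
      using that blow_up_eq_k1_iff unfolding cyc_adj_def by blast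
  qed (use that in blast)
  have "card {k + 1, c' y z, c' x z} = 3" using S by simp
  from card_3_distinct[OF this] have ne: "c' y z \<noteq> k + 1" "c' x z \<noteq> k + 1" "c' y z \<noteq> c' x z"
    by auto
  then have no_adj: "\<not> cyc_adj (2 * n) y z" "\<not> cyc_adj (2 * n) x z"
    using blow_up_eq_k1_iff xyz by auto
  define i j where "i = x div 2" and "j = z div 2"
  have "u div 2 < n" if "u < 2 * n" for u using that by auto
  then have lt: "i < n" "j < n" using xyz(1,3) unfolding i_def j_def by blast+
  have cols: "c' y z = c (y div 2) j" "c' x z = c i j"
    using blow_up_not_adj no_adj unfolding i_def j_def by auto
  then have "i \<noteq> y div 2" using ne(3) by auto
  then have y: "y div 2 = Suc i mod n"
    using Suc_mod_double_fibre xyz(1,7) unfolding i_def by blast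
  have "j \<noteq> i" "j \<noteq> Suc i mod n"
    using fibres_differ[of x z] fibres_differ[of y z] no_adj xyz(1-6) y unfolding i_def j_def
    by auto
  then show ?thesis
    using fibre_triangle_in_new_sets[OF lt] S cols y by simp
qed

lemma triangle_without_cycle_colour_old:
  assumes "S \<in> triangle_sets c' (2 * n)" "k + 1 \<notin> S"
  shows "S \<in> triangle_sets c n"
proof -
  obtain x y z where xyz: "x < 2 * n" "y < 2 * n" "z < 2 * n" "x \<noteq> y" "y \<noteq> z" "x \<noteq> z"
    and S: "S = {c' x y, c' y z, c' x z}" "card S = 3"
    using assms(1) unfolding triangle_sets_def by blast
  have no_adj: "\<not> cyc_adj (2 * n) x y" "\<not> cyc_adj (2 * n) y z" "\<not> cyc_adj (2 * n) x z"
    using blow_up_eq_k1_iff[of x y] blow_up_eq_k1_iff[of y z] blow_up_eq_k1_iff[of x z]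
      xyz assms(2) S(1) by auto
  then have "S = {c (x div 2) (y div 2), c (y div 2) (z div 2), c (x div 2) (z div 2)}"
    using S(1) blow_up_not_adj by simp
  moreover have "x div 2 \<noteq> y div 2" "y div 2 \<noteq> z div 2" "x div 2 \<noteq> z div 2"
    using fibres_differ no_adj xyz by auto
  moreover have "x div 2 < n" "y div 2 < n" "z div 2 < n" using xyz by auto
  ultimately show ?thesis
    using triangle_setsI[of "x div 2" n "y div 2" "z div 2" c] xyz S(2) by auto
qed

lemma triangle_sets_blow_up: "triangle_sets c' (2 * n) = triangle_sets c n \<union> new_sets"
proof
  show "triangle_sets c' (2 * n) \<subseteq> triangle_sets c n \<union> new_sets"
    using triangle_with_cycle_colour_in_new_sets triangle_without_cycle_colour_old by blast
  show "triangle_sets c n \<union> new_sets \<subseteq> triangle_sets c' (2 * n)"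
    using triangle_sets_subset_blow_up recolour_k_in_blow_up distance_two_triangle_in_blow_up
    unfolding new_sets_def by blast
qed

lemma old_sets_avoid_k1: "S \<in> triangle_sets c n \<Longrightarrow> k + 1 \<notin> S"
  using triangle_sets_subset_Pow[OF colouring] by fastforce

lemma finite_triangle_sets: "finite (triangle_sets c n)"
  using triangle_sets_subset_Pow[OF colouring] by (rule finite_subset) simp

lemma k1_in_new_sets: "S \<in> new_sets \<Longrightarrow> k + 1 \<in> S"
  unfolding new_sets_def recolour_k_def by auto

lemma sets_with_k1_blow_up: "{S \<in> triangle_sets c' (2 * n). k + 1 \<in> S} = new_sets"
  unfolding triangle_sets_blow_up using k1_in_new_sets old_sets_avoid_k1 by blast

lemma card_new_sets: "card new_sets = card {S \<in> triangle_sets c n. k \<in> S} + 1"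
proof -
  let ?T = "{S \<in> triangle_sets c n. k \<in> S}"
  have recover: "insert k (recolour_k S - {k + 1}) = S" if "S \<in> ?T" for S
    using that old_sets_avoid_k1 unfolding recolour_k_def by auto
  have "inj_on recolour_k ?T"
    by (rule inj_on_inverseI[where g = "\<lambda>S. insert k (S - {k + 1})"]) (rule recover)
  moreover have "{k + 1, k, col} \<notin> recolour_k ` ?T"
  proof
    assume "{k + 1, k, col} \<in> recolour_k ` ?T"
    then obtain S where "{k + 1, k, col} = recolour_k S" by blast
    then have "k \<in> recolour_k S" by blast
    then show False unfolding recolour_k_def by simp
  qed
  moreover have "finite ?T" using finite_triangle_sets by simp
  ultimately show ?thesis unfolding new_sets_def by (simp add: card_image)
qed

lemma card_triangle_sets_blow_up:
  "card (triangle_sets c' (2 * n)) = card (triangle_sets c n) + card new_sets"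
proof (unfold triangle_sets_blow_up, rule card_Un_disjoint)
  show "finite new_sets" using finite_triangle_sets unfolding new_sets_def by simp
  show "triangle_sets c n \<inter> new_sets = {}" using old_sets_avoid_k1 k1_in_new_sets by blast
qed (rule finite_triangle_sets)

end

theorem lemma6:
  fixes c :: "nat \<Rightarrow> nat \<Rightarrow> nat" and n k l :: nat
  assumes "k \<ge> 1" and "n \<ge> 3"
    and "connected_colouring c n k"
    and "card (triangle_sets c n) = l"
    and "int (card {S \<in> triangle_sets c n. k \<in> S}) = int k - 2"
    and "\<forall>u<n. \<forall>v<n. u \<noteq> v \<longrightarrow>
           (c u v = k \<longleftrightarrow> v = Suc u mod n \<or> u = Suc v mod n)"
    and "\<exists>col. \<forall>i<n. c i ((i + 2) mod n) = col"
  shows "\<exists>c' :: nat \<Rightarrow> nat \<Rightarrow> nat.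
           connected_colouring c' (2 * n) (k + 1)
         \<and> card (triangle_sets c' (2 * n)) = l + k - 1
         \<and> card {S \<in> triangle_sets c' (2 * n). k + 1 \<in> S} = k - 1
         \<and> colour_class_is_cycle c' (2 * n) (k + 1)
         \<and> (\<exists>col. \<forall>i<2 * n. c' i ((i + 2) mod (2 * n)) = col)"
proof -
  obtain col where col: "\<forall>i<n. c i ((i + 2) mod n) = col" using assms(7) by blast
  have k_sets: "card {S \<in> triangle_sets c n. k \<in> S} = k - 2" and "k \<ge> 2"
    using assms(5) by linarith+
  have "n \<noteq> 3"
  proof
    assume n3: "n = 3"
    then have "\<forall>u<n. \<forall>v<n. u \<noteq> v \<longrightarrow> c u v = k"
      using assms(6) cyc_adj_3 unfolding cyc_adj_def by simp
    then have "k = 1" using connected_colouring_monochromatic[OF assms(3)] n3 by simp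
    then show False using \<open>k \<ge> 2\<close> by simp
  qed
  then interpret cycle_coloured c n k col using assms(2,3,6) col by unfold_locales auto
  show ?thesis
  proof (intro exI conjI)
    show "card (triangle_sets c' (2 * n)) = l + k - 1"
      using card_triangle_sets_blow_up card_new_sets k_sets assms(4) \<open>k \<ge> 2\<close> by simp
    show "card {S \<in> triangle_sets c' (2 * n). k + 1 \<in> S} = k - 1"
      using sets_with_k1_blow_up card_new_sets k_sets \<open>k \<ge> 2\<close> by simp
    show "\<forall>i<2 * n. c' i ((i + 2) mod (2 * n)) = k" using blow_up_dist2 by blast
  qed (fact blow_up_connected blow_up_cycle_class)+
qed

end
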